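(* Let $U^*(\beta,T_1,T_2)$ denote a maximizer over $U\in\{0,1,\dots,N_1-1\}$ of $c^{\mathrm{ub}}(U,T_1,T_2)\beta^{-2/\max\{\alpha_1,\alpha_2\}}$ when $\alpha_1\ne\alpha_2$, and of $(\mathcal A_1c_1(U,T_1,T_2)+\mathcal A_2c_2(T_1,T_2))\beta^{-2/\alpha}$ when $\alpha_1=\alpha_2=\alpha$. Then for arbitrary $\alpha_1,\alpha_2>2$ there exists $\underline\beta<\infty$ such that for all $\beta>\underline\beta$, $U^*(\beta,T_1,T_2)=0$ (i.e. $U=0$ attains the maximum).
   Context: Parameters: integers $N_1>N_2\ge1$, $P_1,P_2>0$, $\alpha_1,\alpha_2>2$, $\lambda_1,\lambda_2>0$, $T_1,T_2\ge1$; $U\in\{0,\dots,N_1-1\}$. $\mathcal A_1=2\pi\lambda_1\int_0^\infty z e^{-\pi\lambda_1z^2}\exp(-\pi\lambda_2(P_2/P_1)^{2/\alpha_2}z^{2\alpha_1/\alpha_2})dz$, $\mathcal A_2=2\pi\lambda_2\int_0^\infty z e^{-\pi\lambda_2z^2}\exp(-\pi\lambda_1(P_1/P_2)^{2/\alpha_1}z^{2\alpha_2/\alpha_1})dz$, $f_{Y_1}(y)=\frac{2\pi\lambda_1}{\mathcal A_1}y\exp(-\pi(\lambda_1y^2+\lambda_2(P_2/P_1)^{2/\alpha_2}y^{2\alpha_1/\alpha_2}))$, $f_{Y_2}(y)=\frac{2\pi\lambda_2}{\mathcal A_2}y\exp(-\pi(\lambda_1(P_1/P_2)^{2/\alpha_1}y^{2\alpha_2/\alpha_1}+\lambda_2y^2))$;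 $\bar L_j(T_j)=2\pi\lambda_j\int_0^\infty r\int_{(P_j/(P_1T_j))^{1/\alpha_j}r^{\alpha_1/\alpha_j}}^{(P_j/P_1)^{1/\alpha_j}r^{\alpha_1/\alpha_j}}f_{Y_j}(y)dy\,dr$, $\bar L=\bar L_1(T_1)+\bar L_2(T_2)$; $\Pr(u_{\mathrm{IN},0}=u)=e^{-\bar L}\bar L^u/u!$ for $0\le u<U$ and $\sum_{k\ge U}e^{-\bar L}\bar L^k/k!$ for $u=U$. $B(a,b)=\int_0^1t^{a-1}(1-t)^{b-1}dt$; $\mathcal M_n=\{(m_a)_{a=1}^n\in\mathbb N_0^n:\sum_aa\,m_a=n\}$. In all sums below, $\sum$ over $n_2$ runs from $0$ to $n$, $(p_a)\in\mathcal M_{n_2}$, $(q_a)\in\mathcal M_{n-n_2}$, and $P:=\sum_ap_a$, $Q:=\sum_aq_a$. $\eta_1(U,T_1,T_2)=\frac{\pi\lambda_1}{\mathcal A_1}\sum_{u=0}^U\Pr(u_{\mathrm{IN},0}=u)\sum_{n=0}^{N_1-u-1}\frac1{n!}\sum\binom n{n_2}\frac{n_2!}{\prod p_a!}\frac{(n-n_2)!}{\prod q_a!}\prod_{a=1}^{n_2}\big(\frac{2\pi\lambda_1}{\alpha_1}B(1+\frac2{\alpha_1},a-\frac2{\alpha_1})\big)^{p_a}\prod_{a=1}^{n-n_2}\big(\frac{2\pi\lambda_2}{\alpha_2}(\frac{P_2}{P_1})^{2/\alpha_2}B(1+\frac2{\alpha_2},a-\frac2{\alpha_2})\big)^{q_a}\big(\frac{2\pi\lambda_1}{\alpha_1}B(\frac2{\alpha_1},1-\frac2{\alpha_1})\big)^{-P-\frac{\alpha_1}{\alpha_2}Q-1}\Gamma(P+\frac{\alpha_1}{\alpha_2}Q+1)$.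 $\eta_2=\frac{\pi\lambda_2}{\mathcal A_2}\sum_{n=0}^{N_2-1}\frac1{n!}\sum\binom n{n_2}\frac{n_2!}{\prod p_a!}\frac{(n-n_2)!}{\prod q_a!}\prod_{a=1}^{n_2}\big(\frac{2\pi\lambda_1}{\alpha_1}(\frac{P_1}{P_2})^{2/\alpha_1}B(1+\frac2{\alpha_1},a-\frac2{\alpha_1})\big)^{p_a}\prod_{a=1}^{n-n_2}\big(\frac{2\pi\lambda_2}{\alpha_2}B(1+\frac2{\alpha_2},a-\frac2{\alpha_2})\big)^{q_a}\big(\frac{2\pi\lambda_1}{\alpha_2}B(\frac2{\alpha_2},1-\frac2{\alpha_2})\big)^{-\frac{\alpha_2}{\alpha_1}P-Q-1}\Gamma(\frac{\alpha_2}{\alpha_1}P+Q+1)$ (independent of $U$). $c^{\mathrm{ub}}(U,T_1,T_2)=\eta_1(U,T_1,T_2)$ if $\alpha_1>\alpha_2$ and $\eta_2$ if $\alpha_1<\alpha_2$. When $\alpha_1=\alpha_2=\alpha$: $c_1(U,T_1,T_2)=\frac{\pi\lambda_1}{\mathcal A_1}\sum_{u=0}^U\Pr(u_{\mathrm{IN},0}=u)\sum_{n=0}^{N_1-u-1}\frac1{n!}\sum\binom n{n_2}\frac{n_2!}{\prod p_a!}\frac{(n-n_2)!}{\prod q_a!}\prod_{a=1}^{n_2}\big(\frac{2\pi\lambda_1}{\alpha}B(1+\frac2\alpha,a-\frac2\alpha)\big)^{p_a}\prod_{a=1}^{n-n_2}\big(\frac{2\pi\lambda_2}{\alpha}(\frac{P_2}{P_1})^{2/\alpha}B(1+\frac2\alpha,a-\frac2\alpha)\big)^{q_a}\big(\frac{2\pi}{\alpha}(\lambda_1+\lambda_2(\frac{P_2}{P_1})^{2/\alpha})B(\frac2\alpha,1-\frac2\alpha)\big)^{-P-Q-1}\Gamma(P+Q+1)$,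 and $c_2(T_1,T_2)=\frac{\pi\lambda_2}{\mathcal A_2}\sum_{n=0}^{N_2-1}\frac1{n!}\sum\binom n{n_2}\frac{n_2!}{\prod p_a!}\frac{(n-n_2)!}{\prod q_a!}\prod_{a=1}^{n_2}\big(\frac{2\pi\lambda_1}{\alpha}(\frac{P_1}{P_2})^{2/\alpha}B(1+\frac2\alpha,a-\frac2\alpha)\big)^{p_a}\prod_{a=1}^{n-n_2}\big(\frac{2\pi\lambda_2}{\alpha}B(1+\frac2\alpha,a-\frac2\alpha)\big)^{q_a}\big(\frac{2\pi}{\alpha}(\lambda_1(\frac{P_1}{P_2})^{2/\alpha}+\lambda_2)B(\frac2\alpha,1-\frac2\alpha)\big)^{-P-Q-1}\Gamma(P+Q+1)$. (These are the coefficients of the high-SIR-threshold asymptotic coverage probability, or of its upper bound, for a user-centric interference-nulling scheme with maximum nulling degrees of freedom $U$.) *)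

theory Defs
  imports "HOL-Analysis.Analysis"
begin

text \<open>Parameters throughout: l1 l2 = lambda_1 lambda_2, P1 P2 = transmit powers,
  a1 a2 = path-loss exponents alpha_1 alpha_2.\<close>

definition calA1 :: "real \<Rightarrow> real \<Rightarrow> real \<Rightarrow> real \<Rightarrow> real \<Rightarrow> real \<Rightarrow> real" where
  "calA1 l1 l2 P1 P2 a1 a2 = 2 * pi * l1 * integral {0..} (\<lambda>z. z * exp (- pi * l1 * z ^ 2)
      * exp (- pi * l2 * (P2 / P1) powr (2 / a2) * z powr (2 * a1 / a2)))"

definition calA2 :: "real \<Rightarrow> real \<Rightarrow> real \<Rightarrow> real \<Rightarrow> real \<Rightarrow> real \<Rightarrow> real" where
  "calA2 l1 l2 P1 P2 a1 a2 = 2 * pi * l2 * integral {0..} (\<lambda>z. z * exp (- pi * l2 * z ^ 2)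
      * exp (- pi * l1 * (P1 / P2) powr (2 / a1) * z powr (2 * a2 / a1)))"

definition fY1 :: "real \<Rightarrow> real \<Rightarrow> real \<Rightarrow> real \<Rightarrow> real \<Rightarrow> real \<Rightarrow> real \<Rightarrow> real" where
  "fY1 l1 l2 P1 P2 a1 a2 y = 2 * pi * l1 / calA1 l1 l2 P1 P2 a1 a2 * y
      * exp (- pi * (l1 * y ^ 2 + l2 * (P2 / P1) powr (2 / a2) * y powr (2 * a1 / a2)))"

definition fY2 :: "real \<Rightarrow> real \<Rightarrow> real \<Rightarrow> real \<Rightarrow> real \<Rightarrow> real \<Rightarrow> real \<Rightarrow> real" where
  "fY2 l1 l2 P1 P2 a1 a2 y = 2 * pi * l2 / calA2 l1 l2 P1 P2 a1 a2 * y
      * exp (- pi * (l1 * (P1 / P2) powr (2 / a1) * y powr (2 * a2 / a1) + l2 * y ^ 2))"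

text \<open>\<open>Lbar_j(T_j)\<close>, the mean number of users to be nulled from tier j.\<close>
definition Lbar1 :: "real \<Rightarrow> real \<Rightarrow> real \<Rightarrow> real \<Rightarrow> real \<Rightarrow> real \<Rightarrow> real \<Rightarrow> real" where
  "Lbar1 l1 l2 P1 P2 a1 a2 T1 = 2 * pi * l1 * integral {0..} (\<lambda>r. r *
      integral {(P1 / (P1 * T1)) powr (1 / a1) * r powr (a1 / a1) .. (P1 / P1) powr (1 / a1) * r powr (a1 / a1)}
        (fY1 l1 l2 P1 P2 a1 a2))"

definition Lbar2 :: "real \<Rightarrow> real \<Rightarrow> real \<Rightarrow> real \<Rightarrow> real \<Rightarrow> real \<Rightarrow> real \<Rightarrow> real" where
  "Lbar2 l1 l2 P1 P2 a1 a2 T2 = 2 * pi * l2 * integral {0..} (\<lambda>r. r *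
      integral {(P2 / (P1 * T2)) powr (1 / a2) * r powr (a1 / a2) .. (P2 / P1) powr (1 / a2) * r powr (a1 / a2)}
        (fY2 l1 l2 P1 P2 a1 a2))"

definition Lbar :: "real \<Rightarrow> real \<Rightarrow> real \<Rightarrow> real \<Rightarrow> real \<Rightarrow> real \<Rightarrow> real \<Rightarrow> real \<Rightarrow> real" where
  "Lbar l1 l2 P1 P2 a1 a2 T1 T2 = Lbar1 l1 l2 P1 P2 a1 a2 T1 + Lbar2 l1 l2 P1 P2 a1 a2 T2"

definition PrIN :: "real \<Rightarrow> nat \<Rightarrow> nat \<Rightarrow> real" where
  "PrIN L U u = (if u < U then exp (- L) * L ^ u / fact u
                 else (\<Sum>k. exp (- L) * L ^ (k + U) / fact (k + U)))"

definition Mset :: "nat \<Rightarrow> (nat \<Rightarrow> nat) set" where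
  "Mset n = {m. (\<forall>a. a \<notin> {1..n} \<longrightarrow> m a = 0) \<and> (\<Sum>a=1..n. a * m a) = n}"

definition inner_sum :: "nat \<Rightarrow> (nat \<Rightarrow> real) \<Rightarrow> (nat \<Rightarrow> real) \<Rightarrow> real \<Rightarrow> real \<Rightarrow> real \<Rightarrow> real" where
  "inner_sum n X Y Z kp kq =
    (\<Sum>n2 = 0..n. \<Sum>p \<in> Mset n2. \<Sum>q \<in> Mset (n - n2).
       let PP = real (\<Sum>a=1..n2. p a); QQ = real (\<Sum>a=1..n-n2. q a); e = kp * PP + kq * QQ + 1 in
       real (n choose n2)
       * (fact n2 / (\<Prod>a=1..n2. fact (p a)))
       * (fact (n - n2) / (\<Prod>a=1..n-n2. fact (q a)))
       * (\<Prod>a=1..n2. X a ^ p a) * (\<Prod>a=1..n-n2. Y a ^ q a)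
       * Z powr (- e) * Gamma e)"

definition eta1 :: "real \<Rightarrow> real \<Rightarrow> real \<Rightarrow> real \<Rightarrow> real \<Rightarrow> real \<Rightarrow> nat \<Rightarrow> nat \<Rightarrow> real \<Rightarrow> real \<Rightarrow> real" where
  "eta1 l1 l2 P1 P2 a1 a2 N1 U T1 T2 =
    pi * l1 / calA1 l1 l2 P1 P2 a1 a2 *
    (\<Sum>u = 0..U. PrIN (Lbar l1 l2 P1 P2 a1 a2 T1 T2) U u *
       (\<Sum>n = 0..N1 - u - 1. 1 / fact n *
          inner_sum n
            (\<lambda>a. 2 * pi * l1 / a1 * Beta (1 + 2 / a1) (real a - 2 / a1))
            (\<lambda>a. 2 * pi * l2 / a2 * (P2 / P1) powr (2 / a2) * Beta (1 + 2 / a2) (real a - 2 / a2))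
            (2 * pi * l1 / a1 * Beta (2 / a1) (1 - 2 / a1))
            1 (a1 / a2)))"

definition eta2 :: "real \<Rightarrow> real \<Rightarrow> real \<Rightarrow> real \<Rightarrow> real \<Rightarrow> real \<Rightarrow> nat \<Rightarrow> real" where
  "eta2 l1 l2 P1 P2 a1 a2 N2 =
    pi * l2 / calA2 l1 l2 P1 P2 a1 a2 *
       (\<Sum>n = 0..N2 - 1. 1 / fact n *
          inner_sum n
            (\<lambda>a. 2 * pi * l1 / a1 * (P1 / P2) powr (2 / a1) * Beta (1 + 2 / a1) (real a - 2 / a1))
            (\<lambda>a. 2 * pi * l2 / a2 * Beta (1 + 2 / a2) (real a - 2 / a2))
            (2 * pi * l1 / a2 * Beta (2 / a2) (1 - 2 / a2))
            (a2 / a1) 1)"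

definition c_ub :: "real \<Rightarrow> real \<Rightarrow> real \<Rightarrow> real \<Rightarrow> real \<Rightarrow> real \<Rightarrow> nat \<Rightarrow> nat \<Rightarrow> nat \<Rightarrow> real \<Rightarrow> real \<Rightarrow> real" where
  "c_ub l1 l2 P1 P2 a1 a2 N1 N2 U T1 T2 =
    (if a1 > a2 then eta1 l1 l2 P1 P2 a1 a2 N1 U T1 T2 else eta2 l1 l2 P1 P2 a1 a2 N2)"

definition c1 :: "real \<Rightarrow> real \<Rightarrow> real \<Rightarrow> real \<Rightarrow> real \<Rightarrow> nat \<Rightarrow> nat \<Rightarrow> real \<Rightarrow> real \<Rightarrow> real" where
  "c1 l1 l2 P1 P2 a N1 U T1 T2 =
    pi * l1 / calA1 l1 l2 P1 P2 a a *
    (\<Sum>u = 0..U. PrIN (Lbar l1 l2 P1 P2 a a T1 T2) U u *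
       (\<Sum>n = 0..N1 - u - 1. 1 / fact n *
          inner_sum n
            (\<lambda>i. 2 * pi * l1 / a * Beta (1 + 2 / a) (real i - 2 / a))
            (\<lambda>i. 2 * pi * l2 / a * (P2 / P1) powr (2 / a) * Beta (1 + 2 / a) (real i - 2 / a))
            (2 * pi / a * (l1 + l2 * (P2 / P1) powr (2 / a)) * Beta (2 / a) (1 - 2 / a))
            1 1))"

definition c2 :: "real \<Rightarrow> real \<Rightarrow> real \<Rightarrow> real \<Rightarrow> real \<Rightarrow> nat \<Rightarrow> real \<Rightarrow> real \<Rightarrow> real" where
  "c2 l1 l2 P1 P2 a N2 T1 T2 =
    pi * l2 / calA2 l1 l2 P1 P2 a a *
       (\<Sum>n = 0..N2 - 1. 1 / fact n *
          inner_sum n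
            (\<lambda>i. 2 * pi * l1 / a * (P1 / P2) powr (2 / a) * Beta (1 + 2 / a) (real i - 2 / a))
            (\<lambda>i. 2 * pi * l2 / a * Beta (1 + 2 / a) (real i - 2 / a))
            (2 * pi / a * (l1 * (P1 / P2) powr (2 / a) + l2) * Beta (2 / a) (1 - 2 / a))
            1 1)"

definition objective :: "real \<Rightarrow> real \<Rightarrow> real \<Rightarrow> real \<Rightarrow> real \<Rightarrow> real \<Rightarrow> nat \<Rightarrow> nat \<Rightarrow> nat \<Rightarrow> real \<Rightarrow> real \<Rightarrow> real \<Rightarrow> real" where
  "objective l1 l2 P1 P2 a1 a2 N1 N2 U T1 T2 \<beta> =
    (if a1 \<noteq> a2 then c_ub l1 l2 P1 P2 a1 a2 N1 N2 U T1 T2 * \<beta> powr (- 2 / max a1 a2)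
     else (calA1 l1 l2 P1 P2 a1 a1 * c1 l1 l2 P1 P2 a1 N1 U T1 T2
           + calA2 l1 l2 P1 P2 a1 a1 * c2 l1 l2 P1 P2 a1 N2 T1 T2) * \<beta> powr (- 2 / a1))"

end

theory Submission
  imports Defs
begin

text \<open>The threshold \<open>\<beta>\<close> enters the objective only through the common positive factor
  \<open>\<beta> powr (-2/\<alpha>)\<close>, so \<open>U = 0\<close> is optimal for every \<open>\<beta>\<close> once it is optimal for the
  coefficients. For \<open>\<alpha>\<^sub>1 < \<alpha>\<^sub>2\<close> the coefficient \<open>\<eta>\<^sub>2\<close> does not depend on \<open>U\<close>. Otherwise
  the coefficient averages the partial sums \<open>\<Sum>n \<le> N\<^sub>1-u-1\<close> of a series with nonnegative
  terms over the truncated Poisson law of \<open>u\<close>; each partial sum is at most the longest one,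
  \<open>\<Sum>n \<le> N\<^sub>1-1\<close>, which is the coefficient for \<open>U = 0\<close>, where the law is the point mass at 0.\<close>

lemma integral_nonneg_if_nonneg:
  fixes f :: "'a::euclidean_space \<Rightarrow> real"
  assumes "\<And>x. x \<in> S \<Longrightarrow> 0 \<le> f x"
  shows "0 \<le> integral S f"
proof (cases "f integrable_on S")
  case True
  then show ?thesis using assms by (intro integral_nonneg) auto
next
  case False
  then show ?thesis by (simp add: not_integrable_integral)
qed

lemma Poisson_pmf_sums: "(\<lambda>n. exp (- L) * L ^ n / fact n) sums (1::real)"
proof -
  have "(\<lambda>n. exp (- L) * (L ^ n /\<^sub>R fact n)) sums (exp (- L) * exp L)"
    by (intro sums_mult exp_converges)
  then show ?thesis by (simp add: exp_minus_inverse divide_inverse ac_simps)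
qed

lemma Poisson_tail_sums:
  fixes L :: real
  shows "(\<lambda>k. exp (- L) * L ^ (k + U) / fact (k + U)) sums (1 - (\<Sum>i<U. exp (- L) * L ^ i / fact i))"
  using sums_split_initial_segment[OF Poisson_pmf_sums[of L], of U] by simp

lemma PrIN_nonneg:
  assumes "L \<ge> 0"
  shows "PrIN L U u \<ge> 0"
  using assms sums_summable[OF Poisson_tail_sums[of L U]]
  unfolding PrIN_def by (auto intro!: suminf_nonneg)

lemma sum_PrIN: "(\<Sum>u=0..U. PrIN L U u) = 1"
proof -
  have "(\<Sum>u=0..U. PrIN L U u) = (\<Sum>u<U. PrIN L U u) + PrIN L U U"
    by (simp add: atLeast0AtMost lessThan_Suc_atMost[symmetric])
  also have "(\<Sum>u<U. PrIN L U u) = (\<Sum>i<U. exp (- L) * L ^ i / fact i)"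
    by (intro sum.cong) (auto simp: PrIN_def)
  also have "PrIN L U U = 1 - (\<Sum>i<U. exp (- L) * L ^ i / fact i)"
    using Poisson_tail_sums[of L U] by (simp add: PrIN_def sums_iff)
  finally show ?thesis by simp
qed

lemma PrIN_0_0 [simp]: "PrIN L 0 0 = 1"
  using sum_PrIN[of L 0] by simp

lemma sum_PrIN_mult_le:
  assumes "L \<ge> 0" and "\<And>u. u \<le> U \<Longrightarrow> g u \<le> M"
  shows "(\<Sum>u=0..U. PrIN L U u * g u) \<le> M"
proof -
  have "(\<Sum>u=0..U. PrIN L U u * g u) \<le> (\<Sum>u=0..U. PrIN L U u * M)"
    using assms by (intro sum_mono mult_left_mono PrIN_nonneg) auto
  also have "\<dots> = M"
    by (simp add: sum_distrib_right[symmetric] sum_PrIN)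
  finally show ?thesis .
qed

lemma sum_PrIN_partial_sums_le:
  fixes t :: "nat \<Rightarrow> real"
  assumes "L \<ge> 0" and "\<And>n. t n \<ge> 0"
  shows "(\<Sum>u=0..U. PrIN L U u * (\<Sum>n=0..N-u-1. t n))
      \<le> (\<Sum>u=0..0. PrIN L 0 u * (\<Sum>n=0..N-u-1. t n))"
proof -
  have "(\<Sum>u=0..U. PrIN L U u * (\<Sum>n=0..N-u-1. t n)) \<le> (\<Sum>n=0..N-1. t n)"
    using assms by (intro sum_PrIN_mult_le sum_mono2) auto
  then show ?thesis by simp
qed

lemma Beta_nonneg:
  fixes x y :: real
  assumes "x > 0" and "y > 0"
  shows "Beta x y \<ge> 0"
  using assms unfolding Beta_def
  by (intro divide_nonneg_nonneg mult_nonneg_nonneg less_imp_le[OF Gamma_real_pos]) auto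

lemma Beta_nonneg_index:
  fixes a b :: real and k :: nat
  assumes "a > 2" and "b > 2" and "k \<ge> 1"
  shows "Beta (1 + 2 / a) (real k - 2 / b) \<ge> 0"
proof (rule Beta_nonneg)
  show "1 + 2 / a > 0" using assms by (simp add: add_pos_pos)
  have "2 / b < 1" using assms by (simp add: divide_less_eq)
  then show "real k - 2 / b > 0" using assms by linarith
qed

lemma inner_sum_nonneg:
  assumes "\<And>a. a \<ge> 1 \<Longrightarrow> X a \<ge> 0" and "\<And>a. a \<ge> 1 \<Longrightarrow> Y a \<ge> 0"
    and "kp \<ge> 0" and "kq \<ge> 0"
  shows "inner_sum n X Y Z kp kq \<ge> 0"
  unfolding inner_sum_def Let_def using assms
  by (intro sum_nonneg mult_nonneg_nonneg prod_nonneg zero_le_power divide_nonneg_nonneg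
        less_imp_le[OF Gamma_real_pos])
     (auto intro!: add_nonneg_pos add_nonneg_nonneg mult_nonneg_nonneg sum_nonneg)

lemma calA1_nonneg: "l1 \<ge> 0 \<Longrightarrow> calA1 l1 l2 P1 P2 a1 a2 \<ge> 0"
  unfolding calA1_def by (intro mult_nonneg_nonneg integral_nonneg_if_nonneg) auto

lemma calA2_nonneg: "l2 \<ge> 0 \<Longrightarrow> calA2 l1 l2 P1 P2 a1 a2 \<ge> 0"
  unfolding calA2_def by (intro mult_nonneg_nonneg integral_nonneg_if_nonneg) auto

lemma fY1_nonneg: "l1 \<ge> 0 \<Longrightarrow> y \<ge> 0 \<Longrightarrow> fY1 l1 l2 P1 P2 a1 a2 y \<ge> 0"
  unfolding fY1_def using calA1_nonneg[of l1 l2 P1 P2 a1 a2]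
  by (intro mult_nonneg_nonneg divide_nonneg_nonneg) auto

lemma fY2_nonneg: "l2 \<ge> 0 \<Longrightarrow> y \<ge> 0 \<Longrightarrow> fY2 l1 l2 P1 P2 a1 a2 y \<ge> 0"
  unfolding fY2_def using calA2_nonneg[of l2 l1 P1 P2 a1 a2]
  by (intro mult_nonneg_nonneg divide_nonneg_nonneg) auto

lemma Lbar_nonneg: "l1 \<ge> 0 \<Longrightarrow> l2 \<ge> 0 \<Longrightarrow> Lbar l1 l2 P1 P2 a1 a2 T1 T2 \<ge> 0"
  unfolding Lbar_def Lbar1_def Lbar2_def
  by (intro add_nonneg_nonneg mult_nonneg_nonneg integral_nonneg_if_nonneg fY1_nonneg fY2_nonneg;
      force intro: order_trans[rotated])

lemma eta1_le_eta1_0: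
  assumes "l1 > 0" and "l2 > 0" and "a1 > 2" and "a2 > 2"
  shows "eta1 l1 l2 P1 P2 a1 a2 N1 U T1 T2 \<le> eta1 l1 l2 P1 P2 a1 a2 N1 0 T1 T2"
  unfolding eta1_def using assms calA1_nonneg[of l1 l2 P1 P2 a1 a2]
  by (intro mult_left_mono sum_PrIN_partial_sums_le Lbar_nonneg mult_nonneg_nonneg
        inner_sum_nonneg Beta_nonneg_index) auto

lemma c1_le_c1_0:
  assumes "l1 > 0" and "l2 > 0" and "a > 2"
  shows "c1 l1 l2 P1 P2 a N1 U T1 T2 \<le> c1 l1 l2 P1 P2 a N1 0 T1 T2"
  unfolding c1_def using assms calA1_nonneg[of l1 l2 P1 P2 a a]
  by (intro mult_left_mono sum_PrIN_partial_sums_le Lbar_nonneg mult_nonneg_nonneg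
        inner_sum_nonneg Beta_nonneg_index) auto

theorem lemma5:
  fixes l1 l2 P1 P2 a1 a2 T1 T2 :: real and N1 N2 :: nat
  assumes "N1 > N2" and "N2 \<ge> 1"
    and "P1 > 0" and "P2 > 0"
    and "a1 > 2" and "a2 > 2"
    and "l1 > 0" and "l2 > 0"
    and "T1 \<ge> 1" and "T2 \<ge> 1"
  shows "\<exists>\<beta>0 :: real. \<forall>\<beta> > \<beta>0. \<forall>U < N1.
           objective l1 l2 P1 P2 a1 a2 N1 N2 U T1 T2 \<beta>
             \<le> objective l1 l2 P1 P2 a1 a2 N1 N2 0 T1 T2 \<beta>"
proof (intro exI allI impI)
  fix \<beta> :: real and U :: nat
  have "eta1 l1 l2 P1 P2 a1 a2 N1 U T1 T2 \<le> eta1 l1 l2 P1 P2 a1 a2 N1 0 T1 T2"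
    using assms by (intro eta1_le_eta1_0) auto
  moreover have "c1 l1 l2 P1 P2 a1 N1 U T1 T2 \<le> c1 l1 l2 P1 P2 a1 N1 0 T1 T2"
    using assms by (intro c1_le_c1_0) auto
  moreover have "calA1 l1 l2 P1 P2 a1 a1 \<ge> 0"
    using assms by (intro calA1_nonneg) auto
  ultimately show "objective l1 l2 P1 P2 a1 a2 N1 N2 U T1 T2 \<beta>
      \<le> objective l1 l2 P1 P2 a1 a2 N1 N2 0 T1 T2 \<beta>"
    unfolding objective_def c_ub_def by (auto intro!: mult_right_mono mult_left_mono)
qed

end
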